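(* Let $\tau=\frac{1+\sqrt5}{2}$, $\tau'=\frac{1-\sqrt5}{2}$, $\mathbb{Z}[\tau]=\{a+b\tau: a,b\in\mathbb{Z}\}$ and $\mathbb{Z}[\tau]^-=\{x\in\mathbb{Z}[\tau]: x\le 0\}$ (as a real number). For $k\in\{2,3,4\}$ let $A_k$ be the $k\times k$ matrix $$A_2=\begin{pmatrix}2&-\tau\\-\tau&2\end{pmatrix},\quad A_3=\begin{pmatrix}2&-1&0\\-1&2&-\tau\\0&-\tau&2\end{pmatrix},\quad A_4=\begin{pmatrix}2&-1&0&0\\-1&2&-1&0\\0&-1&2&-\tau\\0&0&-\tau&2\end{pmatrix}.$$ Consider $(k+1)\times(k+1)$ matrices of the form $\begin{pmatrix}2&a^T\\ a&A_k\end{pmatrix}$ with $a\in(\mathbb{Z}[\tau]^-)^k$ (a column vector). Then, for each $k\in\{2,3,4\}$, there is exactly one such matrix with determinant $0$, namely the one with $a=(\tau',\tau')^T$ for $k=2$, $a=(0,\tau',0)^T$ for $k=3$, and $a=(\tau',0,0,0)^T$ for $k=4$.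
   Context: $A_2,A_3,A_4$ are the Cartan matrices of the noncrystallographic Coxeter groups $H_2,H_3,H_4$ (with a fixed ordering of simple roots); the matrices in the conclusion are the extended Cartan matrices of their affine extensions. A generalized (extended) Cartan matrix $(a_{ij})$ here is required to satisfy $a_{ii}=2$, $a_{ij}=a_{ji}$, $a_{ij}\in\mathbb{Z}[\tau]^-$ for $i\ne j$, and $\det(a_{ij})=0$. *)

theory Defs
  imports Complex_Main "Jordan_Normal_Form.Determinant"
begin

definition tau :: real where "tau = (1 + sqrt 5) / 2"
definition tau' :: real where "tau' = (1 - sqrt 5) / 2"

definition Ztau :: "real set" where
  "Ztau = {of_int a + of_int b * tau | a b. True}"

definition Ztau_neg :: "real set" where
  "Ztau_neg = {x \<in> Ztau. x \<le> 0}"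

definition A2 :: "real mat" where
  "A2 = mat_of_rows_list 2 [[2, -tau], [-tau, 2]]"
definition A3 :: "real mat" where
  "A3 = mat_of_rows_list 3 [[2, -1, 0], [-1, 2, -tau], [0, -tau, 2]]"
definition A4 :: "real mat" where
  "A4 = mat_of_rows_list 4 [[2, -1, 0, 0], [-1, 2, -1, 0], [0, -1, 2, -tau], [0, 0, -tau, 2]]"

definition bordered :: "real mat \<Rightarrow> real vec \<Rightarrow> real mat" where
  "bordered A a = mat (dim_row A + 1) (dim_row A + 1)
     (\<lambda>(i, j). if i = 0 \<and> j = 0 then 2
               else if i = 0 then a $ (j - 1)
               else if j = 0 then a $ (i - 1)
               else A $$ (i - 1, j - 1))"

definition affine_solutions :: "real mat \<Rightarrow> nat \<Rightarrow> real vec set" where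
  "affine_solutions A k = {a \<in> carrier_vec k. (\<forall>i<k. a $ i \<in> Ztau_neg) \<and> det (bordered A a) = 0}"

end

(*
  Expanding along the border, det (bordered A a) = 2 det A - a\<^sup>T adj(A) a, so the determinant
  vanishes iff Q(a) = a\<^sup>T adj(A) a equals 2 det A.  For A = A\<^sub>k every coefficient of Q is
  non-negative, so on the non-positive orthant each diagonal term is at most 2 det A, which bounds
  every a\<^sub>i from below.  The Galois conjugation tau \<mapsto> tau' of Z[tau] turns the equation into
  Q'(a') = 2 det A' for the conjugate matrix A', which is positive definite; completing squares
  gives |a\<^sub>i'| \<le> 2.  Since a\<^sub>i - a\<^sub>i' = q sqrt 5 for a\<^sub>i = p + q tau, the two bounds leave only the
  candidates 0, -1 and tau' for each coordinate, and substituting them singles out the stated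
  solutions.
*)
theory Submission
  imports Defs "HOL-Computational_Algebra.Primes"
begin

lemma tau_squared: "tau\<^sup>2 = tau + 1"
  unfolding tau_def by (simp add: power2_eq_square field_simps)

lemma tau'_eq: "tau' = 1 - tau"
  unfolding tau_def tau'_def by (simp add: field_simps)

lemma tau'_squared: "tau'\<^sup>2 = tau' + 1"
  unfolding tau'_def by (simp add: power2_eq_square field_simps)

lemma tau_mult_tau: "tau * tau = tau + 1"
  using tau_squared by (simp add: power2_eq_square)

lemma tau_mult_tau_left: "tau * (tau * z) = tau * z + z"
  by (simp add: mult.assoc[symmetric] tau_mult_tau distrib_right)

lemmas tau_normalize = tau'_eq power2_eq_square tau_mult_tau tau_mult_tau_left

lemma tau_bounds: "1618/1000 < tau" "tau < 16181/10000"
proof -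
  have "2236/1000 < sqrt (5::real)" by (rule real_less_rsqrt) (simp add: power2_eq_square)
  moreover have "sqrt (5::real) < 22361/10000" by (rule real_less_lsqrt) (simp_all add: power2_eq_square)
  ultimately show "1618/1000 < tau" "tau < 16181/10000" unfolding tau_def by simp_all
qed

lemma tau_minus_tau': "tau - tau' = sqrt 5"
  unfolding tau_def tau'_def by (simp add: field_simps)

lemma tau_squared_less_3: "tau\<^sup>2 < 3"
  using tau_squared tau_bounds by simp

lemma tau'_squared_less_1: "tau'\<^sup>2 < 1"
  using tau'_squared tau'_eq tau_bounds by simp

lemma sqrt_5_irrational: "sqrt 5 \<notin> \<rat>"
proof
  assume "sqrt 5 \<in> \<rat>"
  then obtain m n :: nat where "n \<noteq> 0" and "\<bar>sqrt 5\<bar> = real m / real n" and "coprime m n"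
    by (rule Rats_abs_nat_div_natE)
  then have "real m = sqrt 5 * real n"
    by (simp add: field_simps)
  then have "real (m\<^sup>2) = real (5 * n\<^sup>2)"
    by (simp add: power_mult_distrib)
  then have eq: "m\<^sup>2 = 5 * n\<^sup>2"
    by (simp only: of_nat_eq_iff)
  have p5: "prime (5::nat)" by simp
  then have "5 dvd m" using eq by (metis dvd_triv_left prime_dvd_power_iff zero_less_numeral)
  then obtain k where "m = 5 * k" ..
  with eq have "n\<^sup>2 = 5 * k\<^sup>2" by (simp add: power_mult_distrib)
  then have "5 dvd n" using p5 by (metis dvd_triv_left prime_dvd_power_iff zero_less_numeral)
  with \<open>5 dvd m\<close> \<open>coprime m n\<close> show False
    by (metis coprime_common_divisor_nat numeral_eq_one_iff semiring_norm(86))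
qed

lemma Ztau_coords_unique:
  assumes "of_int p + of_int q * tau = of_int p' + of_int q' * tau"
  shows "p = p' \<and> q = q'"
proof -
  have "q = q'"
  proof (rule ccontr)
    assume "q \<noteq> q'"
    from assms have "real_of_int (q - q') * sqrt 5 = - real_of_int (2 * (p - p') + (q - q'))"
      unfolding tau_def by (simp add: field_simps)
    with \<open>q \<noteq> q'\<close> have "sqrt 5 = - real_of_int (2 * (p - p') + (q - q')) / real_of_int (q - q')"
      by (simp add: field_simps)
    then have "sqrt 5 \<in> \<rat>" by simp
    then show False using sqrt_5_irrational by contradiction
  qed
  with assms show ?thesis by simp
qed

lemma golden_mult:
  fixes t :: real
  assumes "t\<^sup>2 = t + 1"
  shows "(of_int p + of_int q * t) * (of_int r + of_int s * t)
       = of_int (p * r + q * s) + of_int (p * s + q * r + q * s) * t"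
proof -
  have "(of_int p + of_int q * t) * (of_int r + of_int s * t)
      = of_int p * of_int r + (of_int p * of_int s + of_int q * of_int r) * t + of_int q * of_int s * t\<^sup>2"
    by (simp add: algebra_simps power2_eq_square)
  then show ?thesis by (simp add: assms algebra_simps)
qed

lemma ZtauE:
  assumes "x \<in> Ztau"
  obtains p q where "x = of_int p + of_int q * tau"
  using assms unfolding Ztau_def by blast

lemma Ztau_coords: "of_int p + of_int q * tau \<in> Ztau"
  unfolding Ztau_def by blast

lemma Ztau_of_int [simp]: "of_int n \<in> Ztau"
  using Ztau_coords[of n 0] by simp

lemma Ztau_numeral [simp]: "numeral n \<in> Ztau"
  using Ztau_of_int[of "numeral n"] by simp

lemma Ztau_0 [simp]: "0 \<in> Ztau" and Ztau_1 [simp]: "1 \<in> Ztau"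
  using Ztau_of_int[of 0] Ztau_of_int[of 1] by simp_all

lemma Ztau_tau [simp]: "tau \<in> Ztau"
  using Ztau_coords[of 0 1] by simp

lemma Ztau_add [simp]:
  assumes "x \<in> Ztau" "y \<in> Ztau"
  shows "x + y \<in> Ztau"
proof -
  obtain p q r s where "x = of_int p + of_int q * tau" and "y = of_int r + of_int s * tau"
    using assms by (elim ZtauE)
  then have "x + y = of_int (p + r) + of_int (q + s) * tau"
    by (simp add: algebra_simps)
  then show ?thesis
    by (simp only: Ztau_coords)
qed

lemma Ztau_uminus [simp]: "x \<in> Ztau \<Longrightarrow> - x \<in> Ztau"
proof (elim ZtauE)
  fix p q assume "x = of_int p + of_int q * tau"
  then have "- x = of_int (- p) + of_int (- q) * tau"
    by simp
  then show "- x \<in> Ztau"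
    by (simp only: Ztau_coords)
qed

lemma Ztau_mult [simp]: "x \<in> Ztau \<Longrightarrow> y \<in> Ztau \<Longrightarrow> x * y \<in> Ztau"
  by (elim ZtauE) (simp only: golden_mult[OF tau_squared] Ztau_coords)

lemma Ztau_power [simp]: "x \<in> Ztau \<Longrightarrow> x ^ n \<in> Ztau"
  by (induction n) simp_all

lemma Ztau_diff [simp]: "x \<in> Ztau \<Longrightarrow> y \<in> Ztau \<Longrightarrow> x - y \<in> Ztau"
  using Ztau_add[of x "- y"] by simp

text \<open>The Galois conjugation sqrt 5 \<mapsto> -sqrt 5 of Z[tau], read off the coordinates of its
  argument, which are unique by irrationality; its value outside \<^const>\<open>Ztau\<close> is irrelevant.\<close>

definition tau_conj :: "real \<Rightarrow> real" where
  "tau_conj x = (THE y. \<exists>p q. x = of_int p + of_int q * tau \<and> y = of_int p + of_int q * tau')"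

lemma tau_conj_coords: "tau_conj (of_int p + of_int q * tau) = of_int p + of_int q * tau'"
  unfolding tau_conj_def by (rule the_equality) (auto dest: Ztau_coords_unique)

lemma tau_conj_of_int [simp]: "tau_conj (of_int n) = of_int n"
  using tau_conj_coords[of n 0] by simp

lemma tau_conj_numeral [simp]: "tau_conj (numeral n) = numeral n"
  using tau_conj_of_int[of "numeral n"] by simp

lemma tau_conj_1 [simp]: "tau_conj 1 = 1"
  using tau_conj_of_int[of 1] by simp

lemma tau_conj_tau [simp]: "tau_conj tau = tau'"
  using tau_conj_coords[of 0 1] by simp

lemma tau_conj_add [simp]:
  assumes "x \<in> Ztau" "y \<in> Ztau"
  shows "tau_conj (x + y) = tau_conj x + tau_conj y"
proof -
  obtain p q r s where x: "x = of_int p + of_int q * tau" and y: "y = of_int r + of_int s * tau"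
    using assms by (elim ZtauE)
  have "x + y = of_int (p + r) + of_int (q + s) * tau"
    unfolding x y by (simp add: algebra_simps)
  then have "tau_conj (x + y) = of_int (p + r) + of_int (q + s) * tau'"
    by (simp only: tau_conj_coords)
  moreover have "tau_conj x = of_int p + of_int q * tau'" and "tau_conj y = of_int r + of_int s * tau'"
    unfolding x y by (simp_all only: tau_conj_coords)
  ultimately show ?thesis
    by (simp add: algebra_simps)
qed

lemma tau_conj_uminus [simp]: "x \<in> Ztau \<Longrightarrow> tau_conj (- x) = - tau_conj x"
  by (elim ZtauE) (metis minus_add_distrib mult_minus_left of_int_minus tau_conj_coords)

lemma tau_conj_diff [simp]:
  "x \<in> Ztau \<Longrightarrow> y \<in> Ztau \<Longrightarrow> tau_conj (x - y) = tau_conj x - tau_conj y"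
  using tau_conj_add[of x "- y"] by simp

lemma tau_conj_mult [simp]:
  assumes "x \<in> Ztau" "y \<in> Ztau"
  shows "tau_conj (x * y) = tau_conj x * tau_conj y"
proof -
  obtain p q r s where x: "x = of_int p + of_int q * tau" and y: "y = of_int r + of_int s * tau"
    using assms by (elim ZtauE)
  show ?thesis
    unfolding x y golden_mult[OF tau_squared] golden_mult[OF tau'_squared] tau_conj_coords ..
qed

lemma tau_conj_power [simp]: "x \<in> Ztau \<Longrightarrow> tau_conj (x ^ n) = tau_conj x ^ n"
  by (induction n) simp_all

lemma Ztau_neg_0: "0 \<in> Ztau_neg"
  unfolding Ztau_neg_def by simp

lemma Ztau_neg_tau': "tau' \<in> Ztau_neg"
  unfolding Ztau_neg_def tau'_eq using tau_bounds by simp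

lemma int_mult_sqrt_5_cases:
  assumes "-4 < of_int q * sqrt 5" and "of_int q * sqrt 5 \<le> 2"
  shows "q = 0 \<or> q = -1"
proof -
  have sqrt_5: "2 < sqrt (5::real)"
    by (rule real_less_rsqrt) simp
  have "\<not> 1 \<le> q"
  proof
    assume "1 \<le> q"
    then have "sqrt 5 \<le> of_int q * sqrt 5"
      by simp
    with assms sqrt_5 show False by linarith
  qed
  moreover have "\<not> q \<le> -2"
  proof
    assume "q \<le> -2"
    then have "of_int q * sqrt 5 \<le> -2 * sqrt 5"
      by (intro mult_right_mono) auto
    with assms sqrt_5 show False by linarith
  qed
  ultimately show ?thesis by linarith
qed

lemma Ztau_neg_small_cases:
  assumes "x \<in> Ztau_neg" and "x\<^sup>2 \<le> 2" and "(tau_conj x)\<^sup>2 \<le> 4"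
  shows "x = 0 \<or> x = -1 \<or> x = tau'"
proof -
  obtain p q where x: "x = of_int p + of_int q * tau" and "x \<le> 0"
    using assms(1) unfolding Ztau_neg_def by (auto elim: ZtauE)
  have "x - tau_conj x = of_int q * sqrt 5"
    by (simp add: x tau_conj_coords algebra_simps flip: tau_minus_tau')
  moreover have "\<bar>x\<bar> \<le> 3/2"
    by (rule power2_le_imp_le) (use assms(2) in \<open>simp_all add: power2_eq_square\<close>)
  moreover have "\<bar>tau_conj x\<bar> \<le> 2"
    by (rule power2_le_imp_le) (use assms(3) in \<open>simp_all add: power2_eq_square\<close>)
  ultimately have "q = 0 \<or> q = -1"
    using \<open>x \<le> 0\<close> by (intro int_mult_sqrt_5_cases) linarith+
  then show ?thesis
  proof
    assume "q = 0"
    then have "-3/2 \<le> real_of_int p" "real_of_int p \<le> 0"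
      using \<open>\<bar>x\<bar> \<le> 3/2\<close> \<open>x \<le> 0\<close> unfolding x by (simp_all add: abs_le_iff)
    then have "p = 0 \<or> p = -1"
      by linarith
    then show ?thesis using \<open>q = 0\<close> x by auto
  next
    assume "q = -1"
    then have "tau - 3/2 \<le> of_int p" "of_int p \<le> tau"
      using \<open>\<bar>x\<bar> \<le> 3/2\<close> \<open>x \<le> 0\<close> unfolding x by (simp_all add: abs_le_iff)
    then have "p = 1"
      using tau_bounds by linarith
    then show ?thesis using \<open>q = -1\<close> x by (simp add: tau'_eq)
  qed
qed

lemma Ztau_neg_small_eq_0:
  assumes "x \<in> Ztau_neg" and "x\<^sup>2 \<le> 1/4" and "(tau_conj x)\<^sup>2 \<le> 4"
  shows "x = 0"
  using Ztau_neg_small_cases[OF assms(1) _ assms(3)] assms(2) tau'_squared tau'_eq tau_bounds by auto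

lemma le_of_scaled_le:
  fixes a b c u :: real
  assumes "0 < a" and "a * u \<le> c" and "c \<le> a * b"
  shows "u \<le> b"
  using assms by (meson mult_le_cancel_left_pos order_trans)

fun det_rows :: "'a :: comm_ring_1 list list \<Rightarrow> 'a" where
  "det_rows [] = 1"
| "det_rows (r # rs) =
     (\<Sum>j<length r. (-1)^j * r ! j * det_rows (map (\<lambda>s. take j s @ drop (Suc j) s) rs))"

lemma det_mat_of_rows_list:
  assumes "length xss = n" and "\<forall>xs \<in> set xss. length xs = n"
  shows "det (mat_of_rows_list n xss) = det_rows xss"
  using assms
proof (induction n arbitrary: xss)
  case 0
  then show ?case by (simp add: det_def' mat_of_rows_list_def)
next
  case (Suc m)
  then obtain r rs where xss: "xss = r # rs" and "length rs = m" and "length r = Suc m"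
    by (cases xss) auto
  let ?M = "mat_of_rows_list (Suc m) xss"
  let ?minor = "\<lambda>j. map (\<lambda>s. take j s @ drop (Suc j) s) rs"
  have minor: "mat_delete ?M 0 j = mat_of_rows_list m (?minor j)" if "j < Suc m" for j
    using Suc.prems that unfolding xss
    by (intro eq_matI) (auto simp: mat_delete_def mat_of_rows_list_def nth_append insert_index_def)
  have "det ?M = (\<Sum>j<Suc m. ?M $$ (0, j) * cofactor ?M 0 j)"
    by (subst laplace_expansion_row[of _ "Suc m" 0]) (auto simp: mat_of_rows_list_def Suc.prems(1))
  also have "\<dots> = (\<Sum>j<Suc m. (-1)^j * r ! j * det_rows (?minor j))"
  proof (rule sum.cong[OF refl])
    fix j assume j: "j \<in> {..<Suc m}"
    have "length (?minor j) = m" and "\<forall>s \<in> set (?minor j). length s = m"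
      using Suc.prems j \<open>length rs = m\<close> unfolding xss by auto
    then have "det (mat_of_rows_list m (?minor j)) = det_rows (?minor j)"
      by (rule Suc.IH)
    then have "cofactor ?M 0 j = (-1)^j * det_rows (?minor j)"
      using j by (simp add: cofactor_def minor)
    moreover have "?M $$ (0, j) = r ! j"
      using j \<open>length r = Suc m\<close> by (simp add: mat_of_rows_list_def xss)
    ultimately show "?M $$ (0, j) * cofactor ?M 0 j = (-1)^j * r ! j * det_rows (?minor j)"
      by simp
  qed
  finally show ?case
    using \<open>length r = Suc m\<close> by (simp add: xss)
qed

text \<open>As a congruence rule this makes the simplifier expand the index set of a Laplace sum
  before it rewrites the summand, which keeps the symbolic evaluation of
  \<^const>\<open>det_rows\<close> on explicit matrices fast.\<close>

lemma sum_index_cong: "A = B \<Longrightarrow> sum f A = sum f B"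
  by simp

lemma bordered_mat_of_rows_list:
  assumes "length a = n" and "length xss = n" and "\<forall>r \<in> set xss. length r = n"
  shows "bordered (mat_of_rows_list n xss) (vec_of_list a)
       = mat_of_rows_list (Suc n) ((2 # a) # map2 (#) a xss)"
  using assms
  by (intro eq_matI) (auto simp: bordered_def mat_of_rows_list_def vec_of_list_index nth_Cons' split: nat.splits)

lemma affine_solutions_singleton:
  assumes "length ys = k" and "set ys \<subseteq> Ztau_neg"
    and "\<And>xs. length xs = k \<Longrightarrow> set xs \<subseteq> Ztau_neg \<Longrightarrow>
           det (bordered A (vec_of_list xs)) = 0 \<longleftrightarrow> xs = ys"
  shows "affine_solutions A k = {vec_of_list ys}"
proof (intro equalityI subsetI)
  fix a assume "a \<in> affine_solutions A k"
  then have "a \<in> carrier_vec k" and "\<forall>i<k. a $ i \<in> Ztau_neg" and "det (bordered A a) = 0"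
    unfolding affine_solutions_def by auto
  moreover have "set (list_of_vec a) \<subseteq> Ztau_neg"
    using calculation(1,2) by (auto simp: set_list_of_vec vec_set_def)
  ultimately have "list_of_vec a = ys"
    using assms(3)[of "list_of_vec a"] by (simp add: vec_list)
  then show "a \<in> {vec_of_list ys}"
    by (metis singletonI vec_list)
next
  fix a assume "a \<in> {vec_of_list ys}"
  then have "a = vec_of_list ys" by simp
  moreover have "\<forall>i<k. ys ! i \<in> Ztau_neg"
    using assms(1,2) by auto
  moreover have "vec_of_list ys \<in> carrier_vec k"
    using assms(1) by (intro carrier_vecI) simp
  moreover have "det (bordered A (vec_of_list ys)) = 0"
    using assms(3)[OF assms(1,2)] by simp
  ultimately show "a \<in> affine_solutions A k"
    unfolding affine_solutions_def by (simp add: vec_of_list_index)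
qed

text \<open>\<open>adj_formk t a\<close> is a^T adj(A_k(t)) a, where A_k(t) is A_k with tau replaced by t;
  det A_k(t) is 4 - t^2, 6 - 2 t^2 and 8 - 3 t^2 for k = 2, 3, 4.\<close>

definition adj_form2 :: "real \<Rightarrow> real \<Rightarrow> real \<Rightarrow> real" where
  "adj_form2 t x y = 2 * x\<^sup>2 + 2 * y\<^sup>2 + 2 * t * x * y"

lemma det_bordered_A2: "det (bordered A2 (vec_of_list [x, y])) = 8 - 2 * tau\<^sup>2 - adj_form2 tau x y"
  unfolding A2_def
  by (subst bordered_mat_of_rows_list)
    (simp_all add: det_mat_of_rows_list lessThan_Suc numeral_eq_Suc adj_form2_def algebra_simps
      power2_eq_square del: vec_of_list_Cons cong: sum_index_cong)

lemma adj_form2_nonpos_bound: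
  assumes "0 \<le> t" "x \<le> 0" "y \<le> 0" "adj_form2 t x y = c"
  shows "2 * x\<^sup>2 \<le> c" "2 * y\<^sup>2 \<le> c"
proof -
  have "0 \<le> t * (x * y)" using assms by (simp add: mult_nonpos_nonpos)
  then have "0 \<le> 2 * t * x * y" by (simp add: mult.assoc)
  then show "2 * x\<^sup>2 \<le> c" "2 * y\<^sup>2 \<le> c"
    using assms(4) zero_le_power2[of x] zero_le_power2[of y] unfolding adj_form2_def by linarith+
qed

lemma adj_form2_coord_bound:
  assumes "t\<^sup>2 < 4" "adj_form2 t x y = 8 - 2 * t\<^sup>2"
  shows "x\<^sup>2 \<le> 4" "y\<^sup>2 \<le> 4"
proof -
  have "2 * adj_form2 t x y = (2 * y + t * x)\<^sup>2 + (4 - t\<^sup>2) * x\<^sup>2"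
       "2 * adj_form2 t x y = (2 * x + t * y)\<^sup>2 + (4 - t\<^sup>2) * y\<^sup>2"
    unfolding adj_form2_def by (simp_all add: power2_eq_square algebra_simps)
  then have "(4 - t\<^sup>2) * x\<^sup>2 \<le> (4 - t\<^sup>2) * 4" "(4 - t\<^sup>2) * y\<^sup>2 \<le> (4 - t\<^sup>2) * 4"
    using assms(2) zero_le_power2[of "2 * y + t * x"] zero_le_power2[of "2 * x + t * y"]
      left_diff_distrib[of 4 "t\<^sup>2" 4] by linarith+
  moreover have "0 < 4 - t\<^sup>2"
    using assms(1) by simp
  ultimately show "x\<^sup>2 \<le> 4" "y\<^sup>2 \<le> 4"
    by (simp_all only: mult_le_cancel_left_pos)
qed

lemma bordered_A2_singular_iff:
  assumes "x \<in> Ztau_neg" "y \<in> Ztau_neg"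
  shows "det (bordered A2 (vec_of_list [x, y])) = 0 \<longleftrightarrow> x = tau' \<and> y = tau'"
proof
  have Z: "x \<in> Ztau" "y \<in> Ztau" and "x \<le> 0" "y \<le> 0"
    using assms unfolding Ztau_neg_def by auto
  assume "det (bordered A2 (vec_of_list [x, y])) = 0"
  then have eq: "adj_form2 tau x y = 8 - 2 * tau\<^sup>2"
    unfolding det_bordered_A2 by simp
  have "tau_conj (adj_form2 tau x y) = tau_conj (8 - 2 * tau\<^sup>2)"
    by (simp only: eq)
  then have "adj_form2 tau' (tau_conj x) (tau_conj y) = 8 - 2 * tau'\<^sup>2"
    using Z by (simp add: adj_form2_def)
  moreover have "tau'\<^sup>2 < 4"
    using tau'_squared_less_1 by simp
  ultimately have conj_bounds: "(tau_conj x)\<^sup>2 \<le> 4" "(tau_conj y)\<^sup>2 \<le> 4"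
    using adj_form2_coord_bound by blast+
  have "0 \<le> tau"
    using tau_bounds by simp
  note bounds = adj_form2_nonpos_bound[OF this \<open>x \<le> 0\<close> \<open>y \<le> 0\<close> eq]
  have "x\<^sup>2 \<le> 2" "y\<^sup>2 \<le> 2"
    using bounds tau_squared tau_bounds by linarith+
  then have "x = 0 \<or> x = -1 \<or> x = tau'" "y = 0 \<or> y = -1 \<or> y = tau'"
    using Ztau_neg_small_cases assms conj_bounds by blast+
  \<comment> \<open>Substitute the candidates before unfolding tau', which would turn \<open>x = tau'\<close> into an
    equation that is no longer used for substitution.\<close>
  then show "x = tau' \<and> y = tau'"
    using eq tau_bounds
    by (elim disjE) (simp_all add: adj_form2_def, simp_all add: tau_normalize algebra_simps)
next
  assume "x = tau' \<and> y = tau'"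
  then show "det (bordered A2 (vec_of_list [x, y])) = 0"
    unfolding det_bordered_A2 by (simp add: adj_form2_def, simp add: tau_normalize algebra_simps)
qed

definition adj_form3 :: "real \<Rightarrow> real \<Rightarrow> real \<Rightarrow> real \<Rightarrow> real" where
  "adj_form3 t x y z =
     (4 - t\<^sup>2) * x\<^sup>2 + 4 * y\<^sup>2 + 3 * z\<^sup>2 + 4 * x * y + 2 * t * x * z + 4 * t * y * z"

lemma det_bordered_A3:
  "det (bordered A3 (vec_of_list [x, y, z])) = 12 - 4 * tau\<^sup>2 - adj_form3 tau x y z"
  unfolding A3_def
  by (subst bordered_mat_of_rows_list)
    (simp_all add: det_mat_of_rows_list lessThan_Suc numeral_eq_Suc adj_form3_def algebra_simps
      power2_eq_square del: vec_of_list_Cons cong: sum_index_cong)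

lemma adj_form3_nonpos_bound:
  assumes "0 \<le> t" "t\<^sup>2 \<le> 4" "x \<le> 0" "y \<le> 0" "z \<le> 0" "adj_form3 t x y z = c"
  shows "(4 - t\<^sup>2) * x\<^sup>2 \<le> c" "4 * y\<^sup>2 \<le> c" "3 * z\<^sup>2 \<le> c"
proof -
  have "0 \<le> x * y" "0 \<le> t * (x * z)" "0 \<le> t * (y * z)"
    using assms by (simp_all add: mult_nonpos_nonpos)
  then have "0 \<le> 4 * x * y" "0 \<le> 2 * t * x * z" "0 \<le> 4 * t * y * z"
    by (simp_all add: mult.assoc)
  moreover have "0 \<le> (4 - t\<^sup>2) * x\<^sup>2"
    using assms(2) by simp
  ultimately show "(4 - t\<^sup>2) * x\<^sup>2 \<le> c" "4 * y\<^sup>2 \<le> c" "3 * z\<^sup>2 \<le> c"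
    using assms(6) zero_le_power2[of y] zero_le_power2[of z] unfolding adj_form3_def by linarith+
qed

lemma adj_form3_coord_bound:
  assumes "t\<^sup>2 < 3" "adj_form3 t x y z = 12 - 4 * t\<^sup>2"
  shows "x\<^sup>2 \<le> 4" "y\<^sup>2 \<le> 4" "z\<^sup>2 \<le> 4"
proof -
  have "adj_form3 t x y z = (x + 2 * y + t * z)\<^sup>2 + (3 - t\<^sup>2) * x\<^sup>2 + (3 - t\<^sup>2) * z\<^sup>2"
       "3 * adj_form3 t x y z
          = (3 * z + t * x + 2 * t * y)\<^sup>2 + (3 - t\<^sup>2) * (2 * x + y)\<^sup>2 + 3 * ((3 - t\<^sup>2) * y\<^sup>2)"
    unfolding adj_form3_def by (simp_all add: power2_eq_square algebra_simps)
  moreover have "0 \<le> (3 - t\<^sup>2) * x\<^sup>2" "0 \<le> (3 - t\<^sup>2) * z\<^sup>2" "0 \<le> (3 - t\<^sup>2) * (2 * x + y)\<^sup>2"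
    using assms(1) by simp_all
  ultimately have "(3 - t\<^sup>2) * x\<^sup>2 \<le> (3 - t\<^sup>2) * 4" "(3 - t\<^sup>2) * y\<^sup>2 \<le> (3 - t\<^sup>2) * 4"
      "(3 - t\<^sup>2) * z\<^sup>2 \<le> (3 - t\<^sup>2) * 4"
    using assms(2) zero_le_power2[of "x + 2 * y + t * z"] zero_le_power2[of "3 * z + t * x + 2 * t * y"]
      left_diff_distrib[of 3 "t\<^sup>2" 4] by linarith+
  moreover have "0 < 3 - t\<^sup>2"
    using assms(1) by simp
  ultimately show "x\<^sup>2 \<le> 4" "y\<^sup>2 \<le> 4" "z\<^sup>2 \<le> 4"
    by (simp_all only: mult_le_cancel_left_pos)
qed

lemma bordered_A3_singular_iff:
  assumes "x \<in> Ztau_neg" "y \<in> Ztau_neg" "z \<in> Ztau_neg"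
  shows "det (bordered A3 (vec_of_list [x, y, z])) = 0 \<longleftrightarrow> x = 0 \<and> y = tau' \<and> z = 0"
proof
  have Z: "x \<in> Ztau" "y \<in> Ztau" "z \<in> Ztau" and "x \<le> 0" "y \<le> 0" "z \<le> 0"
    using assms unfolding Ztau_neg_def by auto
  assume "det (bordered A3 (vec_of_list [x, y, z])) = 0"
  then have eq: "adj_form3 tau x y z = 12 - 4 * tau\<^sup>2"
    unfolding det_bordered_A3 by simp
  have "tau_conj (adj_form3 tau x y z) = tau_conj (12 - 4 * tau\<^sup>2)"
    by (simp only: eq)
  then have "adj_form3 tau' (tau_conj x) (tau_conj y) (tau_conj z) = 12 - 4 * tau'\<^sup>2"
    using Z by (simp add: adj_form3_def)
  moreover have "tau'\<^sup>2 < 3"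
    using tau'_squared_less_1 by simp
  ultimately have conj_bounds: "(tau_conj x)\<^sup>2 \<le> 4" "(tau_conj y)\<^sup>2 \<le> 4" "(tau_conj z)\<^sup>2 \<le> 4"
    using adj_form3_coord_bound by blast+
  have "0 \<le> tau" "tau\<^sup>2 \<le> 4"
    using tau_bounds tau_squared_less_3 by simp_all
  note bounds = adj_form3_nonpos_bound[OF this \<open>x \<le> 0\<close> \<open>y \<le> 0\<close> \<open>z \<le> 0\<close> eq]
  have "x\<^sup>2 \<le> 2"
    by (rule le_of_scaled_le[OF _ bounds(1)])
      (use tau_squared tau_bounds in \<open>simp_all add: algebra_simps\<close>)
  moreover have "y\<^sup>2 \<le> 2" "z\<^sup>2 \<le> 2"
    using bounds(2,3) tau_squared tau_bounds by linarith+
  ultimately have "x = 0 \<or> x = -1 \<or> x = tau'" "y = 0 \<or> y = -1 \<or> y = tau'"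
      "z = 0 \<or> z = -1 \<or> z = tau'"
    using Ztau_neg_small_cases assms conj_bounds by blast+
  then show "x = 0 \<and> y = tau' \<and> z = 0"
    using eq tau_bounds
    by (elim disjE) (simp_all add: adj_form3_def, simp_all add: tau_normalize algebra_simps)
next
  assume "x = 0 \<and> y = tau' \<and> z = 0"
  then show "det (bordered A3 (vec_of_list [x, y, z])) = 0"
    unfolding det_bordered_A3 by (simp add: adj_form3_def, simp add: tau_normalize algebra_simps)
qed

definition adj_form4 :: "real \<Rightarrow> real \<Rightarrow> real \<Rightarrow> real \<Rightarrow> real \<Rightarrow> real" where
  "adj_form4 t x y z w = (6 - 2 * t\<^sup>2) * x\<^sup>2 + (8 - 2 * t\<^sup>2) * y\<^sup>2 + 6 * z\<^sup>2 + 4 * w\<^sup>2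
     + (8 - 2 * t\<^sup>2) * x * y + 4 * x * z + 2 * t * x * w + 8 * y * z + 4 * t * y * w + 6 * t * z * w"

lemma det_bordered_A4:
  "det (bordered A4 (vec_of_list [x, y, z, w])) = 16 - 6 * tau\<^sup>2 - adj_form4 tau x y z w"
  unfolding A4_def
  by (subst bordered_mat_of_rows_list)
    (simp_all add: det_mat_of_rows_list lessThan_Suc numeral_eq_Suc adj_form4_def algebra_simps
      power2_eq_square del: vec_of_list_Cons cong: sum_index_cong)

lemma adj_form4_nonpos_bound:
  assumes "0 \<le> t" "t\<^sup>2 \<le> 3" "x \<le> 0" "y \<le> 0" "z \<le> 0" "w \<le> 0" "adj_form4 t x y z w = c"
  shows "(6 - 2 * t\<^sup>2) * x\<^sup>2 \<le> c" "(8 - 2 * t\<^sup>2) * y\<^sup>2 \<le> c" "6 * z\<^sup>2 \<le> c" "4 * w\<^sup>2 \<le> c"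
proof -
  have "0 \<le> (8 - 2 * t\<^sup>2) * (x * y)" "0 \<le> x * z" "0 \<le> t * (x * w)" "0 \<le> y * z" "0 \<le> t * (y * w)"
      "0 \<le> t * (z * w)"
    using assms by (simp_all add: mult_nonpos_nonpos)
  then have "0 \<le> (8 - 2 * t\<^sup>2) * x * y" "0 \<le> 4 * x * z" "0 \<le> 2 * t * x * w" "0 \<le> 8 * y * z"
      "0 \<le> 4 * t * y * w" "0 \<le> 6 * t * z * w"
    by (simp_all add: mult.assoc)
  moreover have "0 \<le> (6 - 2 * t\<^sup>2) * x\<^sup>2" "0 \<le> (8 - 2 * t\<^sup>2) * y\<^sup>2"
    using assms(2) by simp_all
  ultimately show "(6 - 2 * t\<^sup>2) * x\<^sup>2 \<le> c" "(8 - 2 * t\<^sup>2) * y\<^sup>2 \<le> c" "6 * z\<^sup>2 \<le> c" "4 * w\<^sup>2 \<le> c"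
    using assms(7) zero_le_power2[of z] zero_le_power2[of w] unfolding adj_form4_def by linarith+
qed

lemma adj_form4_coord_bound:
  assumes "3 * t\<^sup>2 < 8" "adj_form4 t x y z w = 16 - 6 * t\<^sup>2"
  shows "x\<^sup>2 \<le> 4" "y\<^sup>2 \<le> 4" "z\<^sup>2 \<le> 4" "w\<^sup>2 \<le> 4"
proof -
  let ?d = "8 - 3 * t\<^sup>2"
  let ?u = "6 * z + 2 * x + 4 * y + 3 * t * w" and ?v = "4 * w + t * x + 2 * t * y + 3 * t * z"
  have "6 * adj_form4 t x y z w = ?u\<^sup>2 + ?d * (x + 2 * y)\<^sup>2 + 3 * (?d * w\<^sup>2) + 3 * (?d * x\<^sup>2)"
       "6 * adj_form4 t x y z w = ?u\<^sup>2 + ?d * (2 * x + y)\<^sup>2 + 3 * (?d * w\<^sup>2) + 3 * (?d * y\<^sup>2)"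
       "12 * adj_form4 t x y z w
          = 3 * ?v\<^sup>2 + ?d * (3 * x + 2 * y + z)\<^sup>2 + 2 * (?d * (2 * y + z)\<^sup>2) + 6 * (?d * z\<^sup>2)"
    unfolding adj_form4_def by (simp_all add: power2_eq_square algebra_simps)
  moreover have "0 \<le> ?d * x\<^sup>2" "0 \<le> ?d * y\<^sup>2" "0 \<le> ?d * z\<^sup>2" "0 \<le> ?d * w\<^sup>2"
      "0 \<le> ?d * (x + 2 * y)\<^sup>2" "0 \<le> ?d * (2 * x + y)\<^sup>2" "0 \<le> ?d * (3 * x + 2 * y + z)\<^sup>2"
      "0 \<le> ?d * (2 * y + z)\<^sup>2"
    using assms(1) by simp_all
  ultimately have "?d * x\<^sup>2 \<le> ?d * 4" "?d * y\<^sup>2 \<le> ?d * 4" "?d * z\<^sup>2 \<le> ?d * 4" "?d * w\<^sup>2 \<le> ?d * 4"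
    using assms(2) zero_le_power2[of ?u] zero_le_power2[of ?v] left_diff_distrib[of 8 "3 * t\<^sup>2" 4]
    by linarith+
  moreover have "0 < ?d"
    using assms(1) by simp
  ultimately show "x\<^sup>2 \<le> 4" "y\<^sup>2 \<le> 4" "z\<^sup>2 \<le> 4" "w\<^sup>2 \<le> 4"
    by (simp_all only: mult_le_cancel_left_pos)
qed

lemma bordered_A4_singular_iff:
  assumes "x \<in> Ztau_neg" "y \<in> Ztau_neg" "z \<in> Ztau_neg" "w \<in> Ztau_neg"
  shows "det (bordered A4 (vec_of_list [x, y, z, w])) = 0
     \<longleftrightarrow> x = tau' \<and> y = 0 \<and> z = 0 \<and> w = 0"
proof
  have Z: "x \<in> Ztau" "y \<in> Ztau" "z \<in> Ztau" "w \<in> Ztau"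
    and "x \<le> 0" "y \<le> 0" "z \<le> 0" "w \<le> 0"
    using assms unfolding Ztau_neg_def by auto
  assume "det (bordered A4 (vec_of_list [x, y, z, w])) = 0"
  then have eq: "adj_form4 tau x y z w = 16 - 6 * tau\<^sup>2"
    unfolding det_bordered_A4 by simp
  have "tau_conj (adj_form4 tau x y z w) = tau_conj (16 - 6 * tau\<^sup>2)"
    by (simp only: eq)
  then have "adj_form4 tau' (tau_conj x) (tau_conj y) (tau_conj z) (tau_conj w) = 16 - 6 * tau'\<^sup>2"
    using Z by (simp add: adj_form4_def)
  moreover have "3 * tau'\<^sup>2 < 8"
    using tau'_squared_less_1 by simp
  ultimately have conj_bounds: "(tau_conj x)\<^sup>2 \<le> 4" "(tau_conj y)\<^sup>2 \<le> 4" "(tau_conj z)\<^sup>2 \<le> 4"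
      "(tau_conj w)\<^sup>2 \<le> 4"
    using adj_form4_coord_bound by blast+
  have "0 \<le> tau" "tau\<^sup>2 \<le> 3"
    using tau_bounds tau_squared_less_3 by simp_all
  note bounds = adj_form4_nonpos_bound[OF this \<open>x \<le> 0\<close> \<open>y \<le> 0\<close> \<open>z \<le> 0\<close> \<open>w \<le> 0\<close> eq]
  have "x\<^sup>2 \<le> 2"
    by (rule le_of_scaled_le[OF _ bounds(1)])
      (use tau_squared tau_bounds in \<open>simp_all add: algebra_simps\<close>)
  moreover have "y\<^sup>2 \<le> 1/4"
    by (rule le_of_scaled_le[OF _ bounds(2)])
      (use tau_squared tau_bounds in \<open>simp_all add: algebra_simps\<close>)
  moreover have "z\<^sup>2 \<le> 1/4" "w\<^sup>2 \<le> 1/4"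
    using bounds(3,4) tau_squared tau_bounds by linarith+
  ultimately have "x = 0 \<or> x = -1 \<or> x = tau'" and "y = 0" "z = 0" "w = 0"
    using Ztau_neg_small_cases Ztau_neg_small_eq_0 assms conj_bounds by blast+
  then show "x = tau' \<and> y = 0 \<and> z = 0 \<and> w = 0"
    using eq tau_bounds
    by (elim disjE) (simp_all add: adj_form4_def, simp_all add: tau_normalize algebra_simps)
next
  assume "x = tau' \<and> y = 0 \<and> z = 0 \<and> w = 0"
  then show "det (bordered A4 (vec_of_list [x, y, z, w])) = 0"
    unfolding det_bordered_A4 by (simp add: adj_form4_def, simp add: tau_normalize algebra_simps)
qed

theorem mainTheorem1:
  shows "affine_solutions A2 2 = {vec_of_list [tau', tau']}
       \<and> affine_solutions A3 3 = {vec_of_list [0, tau', 0]}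
       \<and> affine_solutions A4 4 = {vec_of_list [tau', 0, 0, 0]}"
  using Ztau_neg_0 Ztau_neg_tau'
  by (intro conjI affine_solutions_singleton)
    (auto simp: length_Suc_conv numeral_eq_Suc bordered_A2_singular_iff bordered_A3_singular_iff
      bordered_A4_singular_iff simp del: vec_of_list_Cons)

end
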